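(* Let $p$ and $q$ be non-constant polynomials with complex coefficients, and let $g:\mathbb{C}\to\mathbb{C}$ be a non-constant entire function with no zeros. Then the function $f(z)=p(g(z))+q(1/g(z))$ is surjective from $\mathbb{C}$ onto $\mathbb{C}$. *)

theory Defs
  imports "HOL-Complex_Analysis.Complex_Analysis" "HOL-Computational_Algebra.Polynomial"
begin

end

theory Submission
  imports Defs "HOL-Computational_Algebra.Fundamental_Theorem_Algebra"
begin

text \<open>By the little Picard theorem a non-constant zero-free entire function takes every non-zero
value, so it suffices that the Laurent polynomial \<open>u \<mapsto> p(u) + q(1/u)\<close> takes every value at some
\<open>u \<noteq> 0\<close>. Multiplying \<open>p(u) + q(1/u) - w\<close> by \<open>u\<^sup>m\<close>, \<open>m = deg q\<close>, gives a polynomial of degree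
\<open>m + deg p \<ge> 1\<close> whose constant term is the leading coefficient of \<open>q\<close>; any of its roots is non-zero.\<close>

lemma Laurent_poly_attains_value:
  fixes p q :: "complex poly"
  assumes "degree p \<ge> 1" and "degree q \<ge> 1"
  obtains u where "u \<noteq> 0" and "poly p u + poly q (1 / u) = w"
proof -
  define m where "m = degree q"
  define r where "r = monom 1 m * (p - [:w:]) + reflect_poly q"
  have deg_pw: "degree (p - [:w:]) = degree p"
    using assms(1) degree_add_eq_left[of "[:-w:]" p] by (simp add: diff_conv_add_uminus)
  with assms(1) have "p - [:w:] \<noteq> 0" by auto
  with deg_pw have "degree (monom 1 m * (p - [:w:])) = m + degree p"
    by (simp add: degree_mult_eq degree_monom_eq)
  moreover have "degree (reflect_poly q) < m + degree p"
    using degree_reflect_poly_le[of q] assms(1) m_def by linarith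
  ultimately have "degree r = m + degree p"
    unfolding r_def by (simp add: degree_add_eq_left)
  then have "\<not> constant (poly r)"
    using assms(1) by (subst constant_degree) simp
  then obtain u where root: "poly r u = 0"
    using fundamental_theorem_of_algebra by blast
  have "poly r 0 = lead_coeff q"
    using assms(2) unfolding r_def m_def by (simp add: poly_monom power_0_left)
  with root assms(2) have "u \<noteq> 0" by auto
  moreover have "poly r u = u ^ m * (poly p u + poly q (1 / u) - w)"
    unfolding r_def m_def using \<open>u \<noteq> 0\<close>
    by (simp add: poly_monom poly_reflect_poly_nz algebra_simps inverse_eq_divide)
  ultimately show ?thesis
    using that root by simp
qed

lemma range_zero_free_entire:
  fixes g :: "complex \<Rightarrow> complex"
  assumes "g holomorphic_on UNIV" and "\<And>z. g z \<noteq> 0" and "\<not> (\<exists>c. \<forall>z. g z = c)"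
  shows "range g = - {0}"
proof -
  have "u \<in> range g" if "u \<noteq> 0" for u
  proof (rule ccontr)
    assume "u \<notin> range g"
    with assms(2) have "range g \<inter> {0, u} = {}" by auto
    then obtain c where "g = (\<lambda>x. c)"
      using little_Picard[OF assms(1)] \<open>u \<noteq> 0\<close> by metis
    with assms(3) show False by auto
  qed
  with assms(2) show ?thesis by auto
qed

theorem mainTheorem5:
  fixes p q :: "complex poly" and g :: "complex \<Rightarrow> complex"
  assumes "degree p \<ge> 1" and "degree q \<ge> 1"
    and "g holomorphic_on UNIV"
    and "\<And>z. g z \<noteq> 0"
    and "\<not> (\<exists>c. \<forall>z. g z = c)"
  shows "surj (\<lambda>z. poly p (g z) + poly q (1 / g z))"
proof -
  have "w \<in> range (\<lambda>z. poly p (g z) + poly q (1 / g z))" for w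
  proof -
    obtain u where "u \<noteq> 0" and u: "poly p u + poly q (1 / u) = w"
      using Laurent_poly_attains_value[OF assms(1,2)] .
    then obtain z where "g z = u"
      using range_zero_free_entire[OF assms(3-5)] by (metis ComplI image_iff singletonD)
    with u show ?thesis by auto
  qed
  then show ?thesis by auto
qed

end
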